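(* Let $G$ be a finite undirected graph, $\tau\ge1$ an integer, $e=(u,v)\in E(G)$, and let $G'$ be the graph obtained from $G$ by deleting the edge $e$. Let $e'=(u',v')$ be an edge of $G'$ with $u',v'\in\Delta_\tau(e,G)$. If $\mathrm{dis}_G(u,u')=\mathrm{dis}_{G'}(u,u')$, $\mathrm{dis}_G(u,v')=\mathrm{dis}_{G'}(u,v')$, $\mathrm{dis}_G(v,u')=\mathrm{dis}_{G'}(v,u')$ and $\mathrm{dis}_G(v,v')=\mathrm{dis}_{G'}(v,v')$, then $\mathrm{sup}_\tau(e',G)=\mathrm{sup}_\tau(e',G')$.
   Context: Graphs are finite, simple, undirected and unweighted; paths may repeat vertices and their length is the number of edges. $\mathrm{dis}_H(x,y)$ is the length of a shortest path between $x$ and $y$ in $H$ ($\infty$ if none). For vertices $v,u$ of a graph $H$, $u$ is $\tau$-hop reachable from $v$ in $H$ if there is a path between them in $H$ of length at most $\tau$. $N_\tau(v,H)$ is the set of vertices $u\ne v$ that are $\tau$-hop reachable from $v$ in $H$. For an edge $e=(u,v)$ of $H$, $\Delta_\tau(e,H)=N_\tau(u,H)\cap N_\tau(v,H)$ and $\mathrm{sup}_\tau(e,H)=|\Delta_\tau(e,H)|$. *)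

theory Defs
  imports Main "HOL-Library.Extended_Nat"
begin

definition simple_graph :: "'a set \<Rightarrow> 'a set set \<Rightarrow> bool" where
  "simple_graph V E \<longleftrightarrow> finite V \<and> (\<forall>e\<in>E. \<exists>a b. e = {a, b} \<and> a \<in> V \<and> b \<in> V \<and> a \<noteq> b)"

text \<open>A walk (path possibly repeating vertices), given as its nonempty vertex list;
  its length is the number of edges, i.e. length xs - 1.\<close>
definition walk :: "'a set \<Rightarrow> 'a set set \<Rightarrow> 'a list \<Rightarrow> bool" where
  "walk V E xs \<longleftrightarrow> xs \<noteq> [] \<and> set xs \<subseteq> V \<and>
     (\<forall>i. Suc i < length xs \<longrightarrow> {xs ! i, xs ! Suc i} \<in> E)"

text \<open>Shortest path distance; infinity if no path.\<close>
definition dis :: "'a set \<Rightarrow> 'a set set \<Rightarrow> 'a \<Rightarrow> 'a \<Rightarrow> enat" where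
  "dis V E x y = (INF xs \<in> {xs. walk V E xs \<and> hd xs = x \<and> last xs = y}. enat (length xs - 1))"

definition hop_reachable :: "'a set \<Rightarrow> 'a set set \<Rightarrow> nat \<Rightarrow> 'a \<Rightarrow> 'a \<Rightarrow> bool" where
  "hop_reachable V E \<tau> v u \<longleftrightarrow>
     (\<exists>xs. walk V E xs \<and> hd xs = v \<and> last xs = u \<and> length xs - 1 \<le> \<tau>)"

definition hopN :: "'a set \<Rightarrow> 'a set set \<Rightarrow> nat \<Rightarrow> 'a \<Rightarrow> 'a set" where
  "hopN V E \<tau> v = {u. u \<noteq> v \<and> hop_reachable V E \<tau> v u}"

definition Delta :: "'a set \<Rightarrow> 'a set set \<Rightarrow> nat \<Rightarrow> 'a \<Rightarrow> 'a \<Rightarrow> 'a set" where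
  "Delta V E \<tau> u v = hopN V E \<tau> u \<inter> hopN V E \<tau> v"

definition sup_tau :: "'a set \<Rightarrow> 'a set set \<Rightarrow> nat \<Rightarrow> 'a \<Rightarrow> 'a \<Rightarrow> nat" where
  "sup_tau V E \<tau> u v = card (Delta V E \<tau> u v)"

end

theory Submission
  imports Defs
begin

text \<open>If deleting edges of \<open>G\<close> preserves the distance from every endpoint of a deleted edge
  to \<open>x\<close>, it preserves the distance from every vertex to \<open>x\<close>: follow a walk to \<open>x\<close> until
  it first meets an endpoint of a deleted edge, and continue from there along a shortest
  path of the smaller graph. Hence the \<open>\<tau>\<close>-hop neighbourhoods of \<open>u'\<close> and \<open>v'\<close>, and with
  them \<open>\<Delta>\<^sub>\<tau>(e', G)\<close>, do not change.\<close>

lemma walk_Cons_Cons: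
  "walk V E (a # b # zs) \<longleftrightarrow> a \<in> V \<and> {a, b} \<in> E \<and> walk V E (b # zs)"
proof
  assume "walk V E (a # b # zs)"
  then show "a \<in> V \<and> {a, b} \<in> E \<and> walk V E (b # zs)"
    unfolding walk_def by (auto dest: spec[where x = "Suc _"] spec[where x = 0])
next
  assume walk: "a \<in> V \<and> {a, b} \<in> E \<and> walk V E (b # zs)"
  show "walk V E (a # b # zs)"
    unfolding walk_def
  proof (intro conjI allI impI)
    fix i assume "Suc i < length (a # b # zs)"
    then show "{(a # b # zs) ! i, (a # b # zs) ! Suc i} \<in> E"
      using walk unfolding walk_def by (cases i) auto
  qed (use walk in \<open>auto simp: walk_def\<close>)
qed

lemma walk_rev:
  assumes "walk V E xs"
  shows "walk V E (rev xs)"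
  unfolding walk_def
proof (intro conjI allI impI)
  fix i assume i: "Suc i < length (rev xs)"
  define j where "j = length xs - 2 - i"
  have j: "Suc j < length xs" "length xs - Suc i = Suc j" "length xs - Suc (Suc i) = j"
    using i by (auto simp: j_def)
  have "{xs ! j, xs ! Suc j} \<in> E"
    using assms j(1) by (auto simp: walk_def)
  then show "{rev xs ! i, rev xs ! Suc i} \<in> E"
    using i j by (auto simp: rev_nth insert_commute)
qed (use assms in \<open>auto simp: walk_def\<close>)

lemma dis_le_walk_length:
  "walk V E xs \<Longrightarrow> dis V E (hd xs) (last xs) \<le> enat (length xs - 1)"
  unfolding dis_def by (rule INF_lower) simp

lemma dis_le_iff_hop_reachable: "dis V E x y \<le> enat n \<longleftrightarrow> hop_reachable V E n x y"
proof
  assume "dis V E x y \<le> enat n"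
  then have "dis V E x y < enat (Suc n)"
    by (meson enat_ord_simps(2) le_less_trans lessI)
  then obtain xs where "walk V E xs" "hd xs = x" "last xs = y" "length xs - 1 < Suc n"
    unfolding dis_def by (auto simp: INF_less_iff)
  then show "hop_reachable V E n x y"
    unfolding hop_reachable_def by auto
next
  assume "hop_reachable V E n x y"
  then obtain xs where "walk V E xs" "hd xs = x" "last xs = y" "length xs - 1 \<le> n"
    unfolding hop_reachable_def by auto
  then show "dis V E x y \<le> enat n"
    using dis_le_walk_length[of V E xs] by (metis enat_ord_simps(1) order_trans)
qed

lemma dis_sym: "dis V E x y = dis V E y x"
proof -
  have "dis V E y x \<le> dis V E x y" for x y
    unfolding dis_def[of V E x y]
  proof (rule INF_greatest)
    fix xs assume "xs \<in> {xs. walk V E xs \<and> hd xs = x \<and> last xs = y}"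
    then show "dis V E y x \<le> enat (length xs - 1)"
      using dis_le_walk_length[OF walk_rev] by (fastforce simp: hd_rev last_rev)
  qed
  then show ?thesis
    by (simp add: antisym)
qed

lemma dis_antimono: "E' \<subseteq> E \<Longrightarrow> dis V E x y \<le> dis V E' x y"
  unfolding dis_def by (rule INF_superset_mono) (auto simp: walk_def)

lemma dis_edge_le:
  assumes "{a, b} \<in> E" "a \<in> V"
  shows "dis V E a x \<le> eSuc (dis V E b x)"
proof (cases "dis V E b x")
  case (enat n)
  then obtain zs where "walk V E zs" "hd zs = b" "last zs = x" "length zs - 1 \<le> n"
    using dis_le_iff_hop_reachable[of V E b x n] by (auto simp: hop_reachable_def)
  then obtain zs' where zs: "zs = b # zs'" "walk V E (b # zs')" "last (b # zs') = x"
    "length zs' \<le> n"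
    by (cases zs) (auto simp: walk_def)
  then have "walk V E (a # b # zs')"
    using assms by (simp add: walk_Cons_Cons)
  then have "dis V E a x \<le> enat (Suc (length zs'))"
    using dis_le_walk_length[of V E "a # b # zs'"] zs(3) by simp
  also have "\<dots> \<le> eSuc (enat n)"
    using zs(4) by (simp add: eSuc_enat)
  finally show ?thesis
    using enat by simp
qed simp

lemma dis_le_walk_length_if_endpoints_preserved:
  assumes endpoints: "\<And>a e. e \<in> E - E' \<Longrightarrow> a \<in> e \<Longrightarrow> dis V E' a x \<le> dis V E a x"
  shows "walk V E ys \<Longrightarrow> last ys = x \<Longrightarrow> dis V E' (hd ys) x \<le> enat (length ys - 1)"
proof (induction ys)
  case Nil
  then show ?case by (simp add: walk_def)
next
  case (Cons a ys)
  show ?case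
  proof (cases ys)
    case Nil
    then have "walk V E' [a]" "a = x"
      using Cons.prems by (auto simp: walk_def)
    then show ?thesis
      using dis_le_walk_length[of V E' "[a]"] Nil by simp
  next
    case (Cons b ys')
    have walk: "a \<in> V" "{a, b} \<in> E" "walk V E ys"
      using Cons.prems(1) Cons by (auto simp: walk_Cons_Cons)
    show ?thesis
    proof (cases "{a, b} \<in> E'")
      case True
      have "dis V E' a x \<le> eSuc (dis V E' b x)"
        using dis_edge_le True walk(1) .
      also have "\<dots> \<le> eSuc (enat (length ys - 1))"
        using Cons.IH walk(3) Cons.prems(2) Cons by (simp add: eSuc_mono)
      finally show ?thesis
        using Cons by (simp add: eSuc_enat)
    next
      case False
      then have "dis V E' a x \<le> dis V E a x"
        using endpoints walk(2) by blast
      also have "\<dots> \<le> enat (length (a # ys) - 1)"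
        using dis_le_walk_length[OF Cons.prems(1)] Cons.prems(2) Cons by simp
      finally show ?thesis
        by simp
    qed
  qed
qed

lemma dis_eq_if_endpoints_preserved:
  assumes "E' \<subseteq> E"
    and "\<And>a e. e \<in> E - E' \<Longrightarrow> a \<in> e \<Longrightarrow> dis V E' a x \<le> dis V E a x"
  shows "dis V E' w x = dis V E w x"
proof (rule antisym)
  show "dis V E' w x \<le> dis V E w x"
    unfolding dis_def[of V E w x]
    using dis_le_walk_length_if_endpoints_preserved[OF assms(2)] by (auto intro!: INF_greatest)
  show "dis V E w x \<le> dis V E' w x"
    using assms(1) by (rule dis_antimono)
qed

lemma hopN_eq_if_dis_eq:
  assumes "\<And>w. dis V E' w x = dis V E w x"
  shows "hopN V E' n x = hopN V E n x"
  unfolding hopN_def dis_le_iff_hop_reachable[symmetric]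
  using assms dis_sym[of V _ x] by simp

lemma hopN_eq_if_endpoints_preserved:
  assumes "E' \<subseteq> E"
    and "\<And>a e. e \<in> E - E' \<Longrightarrow> a \<in> e \<Longrightarrow> dis V E' a x \<le> dis V E a x"
  shows "hopN V E' n x = hopN V E n x"
  by (intro hopN_eq_if_dis_eq dis_eq_if_endpoints_preserved[OF assms])

text \<open>Only the four distance hypotheses are needed.\<close>

theorem lemma8:
  fixes V :: "'a set" and E :: "'a set set" and \<tau> :: nat and u v u' v' :: 'a
  assumes "simple_graph V E"
    and "\<tau> \<ge> 1"
    and "{u, v} \<in> E"
    and "{u', v'} \<in> E - {{u, v}}"
    and "u' \<in> Delta V E \<tau> u v" and "v' \<in> Delta V E \<tau> u v"
    and "dis V E u u' = dis V (E - {{u, v}}) u u'"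
    and "dis V E u v' = dis V (E - {{u, v}}) u v'"
    and "dis V E v u' = dis V (E - {{u, v}}) v u'"
    and "dis V E v v' = dis V (E - {{u, v}}) v v'"
  shows "sup_tau V E \<tau> u' v' = sup_tau V (E - {{u, v}}) \<tau> u' v'"
proof -
  have "hopN V (E - {{u, v}}) \<tau> x = hopN V E \<tau> x" if "x \<in> {u', v'}" for x
  proof (rule hopN_eq_if_endpoints_preserved)
    show "dis V (E - {{u, v}}) a x \<le> dis V E a x" if "e \<in> E - (E - {{u, v}})" "a \<in> e" for a e
      using that \<open>x \<in> {u', v'}\<close> assms(7-10) by auto
  qed blast
  then show ?thesis
    unfolding sup_tau_def Delta_def by simp
qed

end
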